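(* Let $\mu \in C^1(\mathbb{R})$ and a periodic $\phi\in C^2(\mathbb{R})$ satisfy $\phi''(x) = 1 - \int_{\mathbb{R}} \mu(\tfrac12 v^2 + \phi(x))\,dv$ together with assumptions (i)–(iv) below. Then $q(x) = \int_{\mathbb{R}} \mu'(\tfrac12 v^2 + \phi(x))\,dv > 0$ for some $x \in [0,P_\phi]$ (indeed for some $x\in[0,P_\phi/2]$). In particular, it is impossible that $\mu'(e) \le 0$ for all $e \in [\phi_-,\infty)$.
   Context: Assumptions: (i) $\mu\in C^1(\mathbb{R})$ is nonnegative; (ii) $\int_{\mathbb{R}} \mu(\tfrac12 v^2)\,dv = 1$; (iii) there are $\gamma>1$, $C>0$ with $|\mu'(y)| \le C/(1+|y|^\gamma)$ for all $y$; (iv) $\phi$ is nonconstant with minimal period $P_\phi$, and, writing $\phi_+ = \max\phi$, $\phi_- = \min\phi$, it is normalized so that $\phi(0)=\phi(P_\phi)=\phi_+$, $\phi(P_\phi/2) = \phi_-$, $\phi(x) = \phi(P_\phi - x)$ for all $x\in[0,P_\phi]$, and $\phi$ is strictly decreasing on $[0,P_\phi/2]$. *)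

theory Defs
  imports "HOL-Analysis.Analysis"
begin

end

theory Submission imports Defs "HOL-Probability.Sinc_Integral" begin

text \<open>Write \<open>\<rho>(\<psi>) = \<integral> \<mu>(v\<^sup>2/2 + \<psi>) dv\<close> and \<open>q(\<psi>) = \<integral> \<mu>'(v\<^sup>2/2 + \<psi>) dv\<close>, so that
  \<open>\<phi>'' = 1 - \<rho>(\<phi>)\<close> and, by Fubini and the fundamental theorem of calculus,
  \<open>\<rho>(b) - \<rho>(a) = \<integral>\<^sub>a\<^sup>b q\<close>. If \<open>q \<le> 0\<close> on \<open>[\<phi>\<^sub>-, \<phi>\<^sub>+]\<close>, or if \<open>\<mu>\<close> is nonincreasing above
  \<open>\<phi>\<^sub>-\<close>, then \<open>\<rho>\<close> is nonincreasing on \<open>[\<phi>\<^sub>-, \<phi>\<^sub>+]\<close>. At the maximum of \<open>\<phi>\<close> we have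
  \<open>\<phi>'' \<le> 0\<close>, i.e. \<open>\<rho>(\<phi>\<^sub>+) \<ge> 1\<close>; at the minimum \<open>\<phi>'' \<ge> 0\<close>, i.e. \<open>\<rho>(\<phi>\<^sub>-) \<le> 1\<close>. Monotonicity
  then forces \<open>\<rho> = 1\<close> on the range of \<open>\<phi>\<close>, hence \<open>\<phi>'' = 0\<close>, and a periodic function with
  vanishing second derivative is constant.\<close>

lemma integrable_const_divide_1_plus_square:
  "integrable lborel (\<lambda>v::real. M / (1 + v\<^sup>2))"
proof -
  have "integrable lborel (\<lambda>x::real. inverse (1 + x^2))"
    using integrable_inverse_1_plus_square by (simp add: set_integrable_def einterval_eq_UNIV)
  then show ?thesis
    by (simp add: divide_inverse integrable_mult_right)
qed

lemma decay_shifted_square_le: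
  fixes g :: "real \<Rightarrow> real"
  assumes "\<gamma> > 1" "C > 0" and decay: "\<And>y. \<bar>g y\<bar> \<le> C / (1 + \<bar>y\<bar> powr \<gamma>)"
    and "\<bar>s\<bar> \<le> K"
  shows "\<bar>g (v\<^sup>2/2 + s)\<bar> \<le> C * (4*K + 5) / (1 + v\<^sup>2)"
proof -
  define y where "y = v\<^sup>2/2 + s"
  have "K \<ge> 0" using assms(4) by linarith
  have "C / (1 + \<bar>y\<bar> powr \<gamma>) \<le> C * (4*K + 5) / (1 + v\<^sup>2)"
  proof (cases "v\<^sup>2 \<ge> 4*K + 4")
    case True
    then have y: "y \<ge> 1" "y \<ge> v\<^sup>2/4" using assms(4) unfolding y_def by (auto simp: abs_le_iff)
    have "\<bar>y\<bar> powr \<gamma> \<ge> \<bar>y\<bar> powr 1"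
      using y assms(1) by (intro powr_mono) auto
    then have "\<bar>y\<bar> powr \<gamma> \<ge> v\<^sup>2/4" using y by simp
    then have "C / (1 + \<bar>y\<bar> powr \<gamma>) \<le> C / (1 + v\<^sup>2/4)"
      using assms(2) by (intro divide_left_mono) (auto intro!: mult_pos_pos add_pos_nonneg)
    also have "\<dots> = 4*C / (4 + v\<^sup>2)" by (simp add: field_simps)
    also have "\<dots> \<le> 4*C / (1 + v\<^sup>2)"
      using assms(2) by (intro divide_left_mono) (auto intro!: mult_pos_pos add_pos_nonneg)
    also have "\<dots> \<le> C * (4*K + 5) / (1 + v\<^sup>2)"
      using assms(2) \<open>K \<ge> 0\<close> by (intro divide_right_mono) (auto intro: add_pos_nonneg)
    finally show ?thesis .
  next
    case False
    have "C / (1 + \<bar>y\<bar> powr \<gamma>) \<le> C"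
      using assms(2) by (simp add: divide_le_eq) (smt (verit) mult_le_cancel_left1 powr_ge_zero)
    also have "C \<le> C * (4*K + 5) / (1 + v\<^sup>2)"
      using False assms(2) by (simp add: le_divide_eq add_pos_nonneg)
    finally show ?thesis .
  qed
  then show ?thesis using decay[of y] unfolding y_def by linarith
qed

lemma integrable_pair_shifted_square:
  fixes g :: "real \<Rightarrow> real"
  assumes g_cont: "continuous_on UNIV g"
    and "\<gamma> > 1" "C > 0" and decay: "\<And>y. \<bar>g y\<bar> \<le> C / (1 + \<bar>y\<bar> powr \<gamma>)"
    and "a \<le> b"
  shows "integrable (lborel \<Otimes>\<^sub>M lborel) (\<lambda>(v, s). indicator {a..b} s * g (v\<^sup>2/2 + s))"
    (is "integrable _ (case_prod ?f)")
proof -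
  define M where "M = C * (4 * (\<bar>a\<bar> + \<bar>b\<bar>) + 5)"
  define c where "c = (LINT s|lborel. indicator {a..b} s :: real)"
  have [measurable]: "g \<in> borel_measurable borel"
    using g_cont by (rule borel_measurable_continuous_onI)
  have section_cont: "continuous_on {a..b} (\<lambda>s. g (v\<^sup>2/2 + s))" for v
    by (intro continuous_on_compose2[OF g_cont] continuous_intros) auto
  have section_integrable: "integrable lborel (?f v)" for v
    using borel_integrable_atLeastAtMost'[OF section_cont, unfolded set_integrable_def] by simp
  have section_bound: "(LINT s|lborel. norm (?f v s)) \<le> M * c / (1 + v\<^sup>2)" for v
  proof -
    have "(LINT s|lborel. norm (?f v s)) \<le> (LINT s|lborel. M / (1 + v\<^sup>2) * indicator {a..b} s)"
    proof (rule integral_mono)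
      show "integrable lborel (\<lambda>s. M / (1 + v\<^sup>2) * indicator {a..b} s)"
        using \<open>a \<le> b\<close> by (intro integrable_mult_right integrable_real_indicator)
          (auto simp: emeasure_lborel_Icc)
      show "norm (?f v s) \<le> M / (1 + v\<^sup>2) * indicator {a..b} s" for s
        using decay_shifted_square_le[OF assms(2-4), of s "\<bar>a\<bar> + \<bar>b\<bar>" v]
        by (auto simp: M_def indicator_def)
    qed (use section_integrable in auto)
    then show ?thesis unfolding c_def by simp
  qed
  show ?thesis
  proof (rule lborel_pair.Fubini_integrable)
    show "integrable lborel (\<lambda>v. LINT s|lborel. norm (case_prod ?f (v, s)))"
    proof (rule Bochner_Integration.integrable_bound)
      show "integrable lborel (\<lambda>v. M * c / (1 + v\<^sup>2))"
        by (rule integrable_const_divide_1_plus_square)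
      show "AE v in lborel. norm (LINT s|lborel. norm (case_prod ?f (v, s))) \<le> norm (M * c / (1 + v\<^sup>2))"
      proof (intro AE_I2)
        fix v
        have "M * c / (1 + v\<^sup>2) \<le> \<bar>M * c\<bar> / (1 + v\<^sup>2)"
          by (intro divide_right_mono) auto
        then show "norm (LINT s|lborel. norm (case_prod ?f (v, s))) \<le> norm (M * c / (1 + v\<^sup>2))"
          using order_trans[OF section_bound[of v]] by simp
      qed
    qed measurable
  qed (use section_integrable in \<open>auto\<close>)
qed

lemma integral_shifted_square_diff:
  fixes \<mu> \<mu>' :: "real \<Rightarrow> real"
  assumes mu_deriv: "\<And>y. (\<mu> has_real_derivative \<mu>' y) (at y)"
    and mu'_cont: "continuous_on UNIV \<mu>'"
    and decay: "\<gamma> > 1" "C > 0" "\<And>y. \<bar>\<mu>' y\<bar> \<le> C / (1 + \<bar>y\<bar> powr \<gamma>)"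
    and "a \<le> b"
    and "integrable lborel (\<lambda>v. \<mu> (v\<^sup>2/2 + a))" "integrable lborel (\<lambda>v. \<mu> (v\<^sup>2/2 + b))"
  shows "(LINT v|lborel. \<mu> (v\<^sup>2/2 + b)) - (LINT v|lborel. \<mu> (v\<^sup>2/2 + a))
       = (LINT s|lborel. indicator {a..b} s * (LINT v|lborel. \<mu>' (v\<^sup>2/2 + s)))"
proof -
  have FTC: "(LINT s|lborel. indicator {a..b} s * \<mu>' (v\<^sup>2/2 + s)) = \<mu> (v\<^sup>2/2 + b) - \<mu> (v\<^sup>2/2 + a)"
    for v
  proof -
    have "((\<lambda>s. \<mu> (v\<^sup>2/2 + s)) has_real_derivative \<mu>' (v\<^sup>2/2 + s)) (at s within {a..b})" for s
      using DERIV_chain2[OF mu_deriv DERIV_add[OF DERIV_const DERIV_ident, of "v\<^sup>2/2" s]]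
      by (simp add: has_field_derivative_at_within)
    moreover have "continuous_on {a..b} (\<lambda>s. \<mu>' (v\<^sup>2/2 + s))"
      by (intro continuous_on_compose2[OF mu'_cont] continuous_intros) auto
    ultimately show ?thesis
      using integral_FTC_atLeastAtMost[OF \<open>a \<le> b\<close>, of "\<lambda>s. \<mu> (v\<^sup>2/2 + s)"]
      by (simp add: has_real_derivative_iff_has_vector_derivative)
  qed
  have "(LINT s|lborel. indicator {a..b} s * (LINT v|lborel. \<mu>' (v\<^sup>2/2 + s)))
      = (LINT s|lborel. LINT v|lborel. indicator {a..b} s * \<mu>' (v\<^sup>2/2 + s))"
    by simp
  also have "\<dots> = (LINT v|lborel. LINT s|lborel. indicator {a..b} s * \<mu>' (v\<^sup>2/2 + s))"
    using lborel_pair.Fubini_integral[OF integrable_pair_shifted_square[OF mu'_cont decay \<open>a \<le> b\<close>]]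
    by simp
  also have "\<dots> = (LINT v|lborel. \<mu> (v\<^sup>2/2 + b) - \<mu> (v\<^sup>2/2 + a))"
    by (simp only: FTC)
  finally show ?thesis
    using assms(7,8) by simp
qed

lemma antimono_on_integral_shifted_square:
  fixes \<mu> \<mu>' :: "real \<Rightarrow> real"
  assumes mu_deriv: "\<And>y. (\<mu> has_real_derivative \<mu>' y) (at y)"
    and mu'_cont: "continuous_on UNIV \<mu>'"
    and decay: "\<gamma> > 1" "C > 0" "\<And>y. \<bar>\<mu>' y\<bar> \<le> C / (1 + \<bar>y\<bar> powr \<gamma>)"
    and integrable: "\<And>\<psi>. \<psi> \<in> {c..d} \<Longrightarrow> integrable lborel (\<lambda>v. \<mu> (v\<^sup>2/2 + \<psi>))"
    and nonpos: "\<And>\<psi>. \<psi> \<in> {c..d} \<Longrightarrow> (LINT v|lborel. \<mu>' (v\<^sup>2/2 + \<psi>)) \<le> 0"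
  shows "antimono_on {c..d} (\<lambda>\<psi>. LINT v|lborel. \<mu> (v\<^sup>2/2 + \<psi>))"
proof (rule monotone_onI)
  fix a b assume ab: "a \<in> {c..d}" "b \<in> {c..d}" "a \<le> b"
  have "(LINT v|lborel. \<mu> (v\<^sup>2/2 + b)) - (LINT v|lborel. \<mu> (v\<^sup>2/2 + a))
      = (LINT s|lborel. indicator {a..b} s * (LINT v|lborel. \<mu>' (v\<^sup>2/2 + s)))"
    using ab by (intro integral_shifted_square_diff[OF mu_deriv mu'_cont decay] integrable)
  also have "\<dots> \<le> 0"
  proof -
    have "indicator {a..b} s * (LINT v|lborel. \<mu>' (v\<^sup>2/2 + s)) \<le> 0" for s
      using nonpos[of s] ab by (auto simp: indicator_def)
    then show ?thesis
      using Bochner_Integration.integral_nonneg[of lborel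
          "\<lambda>s. - indicator {a..b} s * (LINT v|lborel. \<mu>' (v\<^sup>2/2 + s))"] by simp
  qed
  finally show "(LINT v|lborel. \<mu> (v\<^sup>2/2 + b)) \<le> (LINT v|lborel. \<mu> (v\<^sup>2/2 + a))"
    by simp
qed

lemma antimono_on_integral_shifted_square_of_deriv_nonpos:
  fixes \<mu> \<mu>' :: "real \<Rightarrow> real"
  assumes mu_deriv: "\<And>y. (\<mu> has_real_derivative \<mu>' y) (at y)"
    and nonpos: "\<And>e. e \<ge> c \<Longrightarrow> \<mu>' e \<le> 0"
    and integrable: "\<And>\<psi>. \<psi> \<in> {c..d} \<Longrightarrow> integrable lborel (\<lambda>v. \<mu> (v\<^sup>2/2 + \<psi>))"
  shows "antimono_on {c..d} (\<lambda>\<psi>. LINT v|lborel. \<mu> (v\<^sup>2/2 + \<psi>))"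
proof (rule monotone_onI)
  fix a b assume ab: "a \<in> {c..d}" "b \<in> {c..d}" "a \<le> b"
  have "\<mu> (v\<^sup>2/2 + b) \<le> \<mu> (v\<^sup>2/2 + a)" for v
  proof (rule DERIV_nonpos_imp_nonincreasing[of _ _ \<mu>])
    fix e assume "v\<^sup>2/2 + a \<le> e" "e \<le> v\<^sup>2/2 + b"
    then have "e \<ge> c"
      using ab(1) zero_le_power2[of v] by (simp only: atLeastAtMost_iff) linarith
    then show "\<exists>y. (\<mu> has_real_derivative y) (at e) \<and> y \<le> 0"
      using mu_deriv nonpos by blast
  qed (use ab in simp)
  then show "(LINT v|lborel. \<mu> (v\<^sup>2/2 + b)) \<le> (LINT v|lborel. \<mu> (v\<^sup>2/2 + a))"
    using ab by (intro integral_mono integrable) auto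
qed

lemma second_deriv_nonpos_at_max:
  fixes f f' f'' :: "real \<Rightarrow> real"
  assumes f_deriv: "\<And>x. (f has_real_derivative f' x) (at x)"
    and f'_deriv: "(f' has_real_derivative f'' x0) (at x0)"
    and max: "\<And>x. f x \<le> f x0"
  shows "f'' x0 \<le> 0"
proof (rule ccontr)
  assume "\<not> f'' x0 \<le> 0"
  have "f' x0 = 0"
    by (rule DERIV_local_max[OF f_deriv, of 1]) (use max in auto)
  moreover obtain d where "d > 0" and f'_incr: "\<And>h. h > 0 \<Longrightarrow> h < d \<Longrightarrow> f' x0 < f' (x0 + h)"
    using DERIV_pos_inc_right[OF f'_deriv] \<open>\<not> f'' x0 \<le> 0\<close> by force
  moreover obtain z where "x0 < z" "z < x0 + d/2" "f (x0 + d/2) - f x0 = d/2 * f' z"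
    using MVT2[of x0 "x0 + d/2" f f'] f_deriv \<open>d > 0\<close> by auto
  ultimately have "d/2 * f' z > 0"
    using f'_incr[of "z - x0"] by simp
  with \<open>f (x0 + d/2) - f x0 = d/2 * f' z\<close> max[of "x0 + d/2"] show False
    by linarith
qed

lemma second_deriv_nonneg_at_min:
  fixes f f' f'' :: "real \<Rightarrow> real"
  assumes "\<And>x. (f has_real_derivative f' x) (at x)"
    and "(f' has_real_derivative f'' x0) (at x0)"
    and "\<And>x. f x0 \<le> f x"
  shows "f'' x0 \<ge> 0"
proof -
  have "- f'' x0 \<le> 0"
    using assms by (intro second_deriv_nonpos_at_max[of "\<lambda>x. - f x" "\<lambda>x. - f' x"]) (auto intro: DERIV_minus)
  then show ?thesis by simp
qed

lemma zero_second_deriv_periodic_imp_const: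
  fixes f f' :: "real \<Rightarrow> real"
  assumes f_deriv: "\<And>x. (f has_real_derivative f' x) (at x)"
    and f'_deriv: "\<And>x. (f' has_real_derivative 0) (at x)"
    and "P \<noteq> 0" and "f P = f 0"
  shows "f x = f 0"
proof -
  have "f' y = f' 0" for y
    using DERIV_isconst_all f'_deriv by blast
  then have "((\<lambda>x. f x - f' 0 * x) has_real_derivative 0) (at y)" for y
    using DERIV_diff[OF f_deriv DERIV_cmult[OF DERIV_ident]] by (metis mult.right_neutral diff_self)
  then have linear: "f x - f' 0 * x = f 0" for x
    using DERIV_isconst_all[of "\<lambda>x. f x - f' 0 * x" x 0] by simp
  then have "f' 0 = 0"
    using linear[of P] \<open>P \<noteq> 0\<close> \<open>f P = f 0\<close> by simp
  then show ?thesis using linear[of x] by simp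
qed

lemma antitone_density_imp_const:
  fixes \<phi> \<phi>' \<phi>'' \<rho> :: "real \<Rightarrow> real"
  assumes phi_deriv: "\<And>x. (\<phi> has_real_derivative \<phi>' x) (at x)"
    and phi'_deriv: "\<And>x. (\<phi>' has_real_derivative \<phi>'' x) (at x)"
    and poisson: "\<And>x. \<phi>'' x = 1 - \<rho> (\<phi> x)"
    and max: "\<And>x. \<phi> x \<le> \<phi> x_max" and min: "\<And>x. \<phi> x_min \<le> \<phi> x"
    and antitone: "antimono_on {\<phi> x_min..\<phi> x_max} \<rho>"
    and "P \<noteq> 0" and "\<phi> P = \<phi> 0"
  shows "\<phi> x = \<phi> 0"
proof (rule zero_second_deriv_periodic_imp_const[OF phi_deriv _ \<open>P \<noteq> 0\<close> \<open>\<phi> P = \<phi> 0\<close>])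
  have "\<rho> (\<phi> x_max) \<ge> 1"
    using second_deriv_nonpos_at_max[of \<phi> \<phi>' \<phi>'' x_max, OF phi_deriv phi'_deriv max] poisson[of x_max] by simp
  moreover have "\<rho> (\<phi> x_min) \<le> 1"
    using second_deriv_nonneg_at_min[of \<phi> \<phi>' \<phi>'' x_min, OF phi_deriv phi'_deriv min] poisson[of x_min] by simp
  moreover have "\<rho> (\<phi> x_max) \<le> \<rho> (\<phi> y)" "\<rho> (\<phi> y) \<le> \<rho> (\<phi> x_min)" for y
    using max[of y] min[of y] max[of x_min] by (auto intro!: monotone_onD[OF antitone])
  ultimately have "\<phi>'' y = 0" for y
    using poisson[of y] by (smt (verit))
  then show "(\<phi>' has_real_derivative 0) (at y)" for y
    using phi'_deriv by metis
qed

theorem theorem3: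
  fixes \<mu> \<mu>' \<phi> \<phi>' \<phi>'' :: "real \<Rightarrow> real" and P :: real
  assumes mu_deriv: "\<And>y. (\<mu> has_real_derivative \<mu>' y) (at y)"
    and mu'_cont: "continuous_on UNIV \<mu>'"
    and mu_nonneg: "\<And>y. \<mu> y \<ge> 0"
    and mu_norm: "(LINT v|lborel. \<mu> (v\<^sup>2 / 2)) = 1"
    and mu'_decay: "\<exists>\<gamma> C. \<gamma> > 1 \<and> C > 0 \<and> (\<forall>y. \<bar>\<mu>' y\<bar> \<le> C / (1 + \<bar>y\<bar> powr \<gamma>))"
    and phi_deriv: "\<And>x. (\<phi> has_real_derivative \<phi>' x) (at x)"
    and phi'_deriv: "\<And>x. (\<phi>' has_real_derivative \<phi>'' x) (at x)"
    and phi''_cont: "continuous_on UNIV \<phi>''"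
    and rho_integrable: "\<And>x. integrable lborel (\<lambda>v. \<mu> (v\<^sup>2 / 2 + \<phi> x))"
    and poisson: "\<And>x. \<phi>'' x = 1 - (LINT v|lborel. \<mu> (v\<^sup>2 / 2 + \<phi> x))"
    and P_pos: "P > 0"
    and periodic: "\<And>x. \<phi> (x + P) = \<phi> x"
    and minimal_period: "\<And>p. 0 < p \<Longrightarrow> p < P \<Longrightarrow> \<not> (\<forall>x. \<phi> (x + p) = \<phi> x)"
    and nonconst: "\<exists>x y. \<phi> x \<noteq> \<phi> y"
    and phi_max: "\<And>x. \<phi> x \<le> \<phi> 0"
    and phi_min: "\<And>x. \<phi> (P / 2) \<le> \<phi> x"
    and phi_P: "\<phi> P = \<phi> 0"
    and phi_sym: "\<And>x. x \<in> {0..P} \<Longrightarrow> \<phi> x = \<phi> (P - x)"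
    and phi_decr: "strict_antimono_on {0..P/2} \<phi>"
  shows "(\<exists>x\<in>{0..P/2}. (LINT v|lborel. \<mu>' (v\<^sup>2 / 2 + \<phi> x)) > 0)
         \<and> \<not> (\<forall>e\<ge>\<phi> (P / 2). \<mu>' e \<le> 0)"
proof -
  define \<rho> where "\<rho> \<psi> = (LINT v|lborel. \<mu> (v\<^sup>2 / 2 + \<psi>))" for \<psi>
  let ?I = "{\<phi> (P/2)..\<phi> 0}"
  have "continuous_on {0..P/2} \<phi>"
    using phi_deriv by (meson DERIV_isCont continuous_at_imp_continuous_on)
  then have range: "\<exists>x\<in>{0..P/2}. \<phi> x = \<psi>" if "\<psi> \<in> ?I" for \<psi>
    using IVT2'[of \<phi> "P/2" \<psi> 0] that P_pos by auto
  have integrable: "integrable lborel (\<lambda>v. \<mu> (v\<^sup>2 / 2 + \<psi>))" if "\<psi> \<in> ?I" for \<psi>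
    using range[OF that] rho_integrable by auto
  have "\<not> antimono_on ?I \<rho>"
  proof
    assume "antimono_on ?I \<rho>"
    then have "\<phi> x = \<phi> 0" for x
      by (rule antitone_density_imp_const[OF phi_deriv phi'_deriv poisson[folded \<rho>_def]
          phi_max phi_min _ _ phi_P]) (use P_pos in simp)
    with nonconst show False by metis
  qed
  obtain \<gamma> C where decay: "\<gamma> > 1" "C > 0" "\<And>y. \<bar>\<mu>' y\<bar> \<le> C / (1 + \<bar>y\<bar> powr \<gamma>)"
    using mu'_decay by blast
  have "\<exists>x\<in>{0..P/2}. (LINT v|lborel. \<mu>' (v\<^sup>2 / 2 + \<phi> x)) > 0"
  proof (rule ccontr)
    assume "\<not> ?thesis"
    then have "(LINT v|lborel. \<mu>' (v\<^sup>2/2 + \<psi>)) \<le> 0" if "\<psi> \<in> ?I" for \<psi>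
      using range[OF that] by (auto simp: not_less)
    then have "antimono_on ?I \<rho>"
      unfolding \<rho>_def by (intro antimono_on_integral_shifted_square[OF mu_deriv mu'_cont decay] integrable)
    with \<open>\<not> antimono_on ?I \<rho>\<close> show False ..
  qed
  moreover have "\<not> (\<forall>e\<ge>\<phi> (P / 2). \<mu>' e \<le> 0)"
    using \<open>\<not> antimono_on ?I \<rho>\<close> antimono_on_integral_shifted_square_of_deriv_nonpos[OF mu_deriv _ integrable]
    unfolding \<rho>_def by blast
  ultimately show ?thesis ..
qed

end
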